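(* Let $X$ be a connected, non-bipartite strongly regular graph with parameters $(n,k,a,c)$, where $k\ge 3$ and $k>c\ge 1$, and assume $s^2=(a-c)^2+4(k-c)$ for some positive integer $s$, so that the adjacency matrix has the integer eigenvalue $\lambda_1=e:=\frac{a-c+s}{2}$ (and $k=(e+1)c+e(e-a)$, $s=c+2e-a$). Let $$D=e(e+1)(e-a)(e-a-1),\qquad F=(e+1)(e^2+2e-a)(e^2+3e-a).$$ Then $D$ is a multiple of $c$ and $F$ is a multiple of $c+2e-a$.
   Context: A strongly regular graph with parameters $(n,k,a,c)$ has $n$ vertices, is regular of degree $k$, any two adjacent vertices have exactly $a$ common neighbours, and any two distinct non-adjacent vertices have exactly $c$ common neighbours. The eigenvalues of its adjacency matrix are $k$ and the two roots $\lambda_1>\lambda_2$ of $\lambda^2-(a-c)\lambda-(k-c)=0$. *)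

theory Defs
  imports Main
begin

definition simple_graph :: "'a set \<Rightarrow> ('a \<Rightarrow> 'a \<Rightarrow> bool) \<Rightarrow> bool" where
  "simple_graph V E \<longleftrightarrow> finite V \<and> (\<forall>x y. E x y \<longrightarrow> x \<in> V \<and> y \<in> V)
     \<and> (\<forall>x y. E x y \<longrightarrow> E y x) \<and> (\<forall>x. \<not> E x x)"

definition strongly_regular ::
  "'a set \<Rightarrow> ('a \<Rightarrow> 'a \<Rightarrow> bool) \<Rightarrow> nat \<Rightarrow> nat \<Rightarrow> nat \<Rightarrow> nat \<Rightarrow> bool" where
  "strongly_regular V E n k a c \<longleftrightarrow> simple_graph V E \<and> card V = n
     \<and> (\<forall>x\<in>V. card {y\<in>V. E x y} = k)
     \<and> (\<forall>x\<in>V. \<forall>y\<in>V. E x y \<longrightarrow> card {z\<in>V. E x z \<and> E y z} = a)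
     \<and> (\<forall>x\<in>V. \<forall>y\<in>V. x \<noteq> y \<and> \<not> E x y \<longrightarrow> card {z\<in>V. E x z \<and> E y z} = c)"

definition graph_connected :: "'a set \<Rightarrow> ('a \<Rightarrow> 'a \<Rightarrow> bool) \<Rightarrow> bool" where
  "graph_connected V E \<longleftrightarrow> (\<forall>x\<in>V. \<forall>y\<in>V. E\<^sup>*\<^sup>* x y)"

definition bipartite :: "'a set \<Rightarrow> ('a \<Rightarrow> 'a \<Rightarrow> bool) \<Rightarrow> bool" where
  "bipartite V E \<longleftrightarrow> (\<exists>A. A \<subseteq> V \<and> (\<forall>x y. E x y \<longrightarrow> (x \<in> A \<longleftrightarrow> y \<notin> A)))"

end

theory Submission
  imports Defs "Jordan_Normal_Form.Schur_Decomposition"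
begin

(* Let A be the adjacency matrix, J the all-ones matrix and t = e - s the second eigenvalue.
   Then Q = A - t I - ((k - t) / n) J satisfies Q\<^sup>2 = s Q, so its trace -(k + t (n - 1)) is s times
   an eigenvalue multiplicity, and s divides k + e (n - 1).  Both divisibilities then follow from
   this, the counting identity k (k - a - 1) = c (n - 1 - k) and a = c + 2 e - s,
   k = s e - e\<^sup>2 + c: since e (e - a) = k - c (e + 1), D is k (k - a - 1) modulo c, and F is
   (e + 1) k (k - e) = c (k + e (n - 1)) modulo s. *)

definition mat_trace :: "'a::comm_semiring_1 mat \<Rightarrow> 'a" where
  "mat_trace A = (\<Sum>i\<in>{0..<dim_row A}. A $$ (i, i))"

lemma mat_trace_mult_comm:
  fixes A B :: "'a::comm_semiring_1 mat"
  assumes "A \<in> carrier_mat n m" "B \<in> carrier_mat m n"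
  shows "mat_trace (A * B) = mat_trace (B * A)"
proof -
  have "mat_trace (A * B) = (\<Sum>i\<in>{0..<n}. \<Sum>l\<in>{0..<m}. A $$ (i, l) * B $$ (l, i))"
    using assms by (simp add: mat_trace_def scalar_prod_def)
  also have "\<dots> = (\<Sum>l\<in>{0..<m}. \<Sum>i\<in>{0..<n}. B $$ (l, i) * A $$ (i, l))"
    by (subst sum.swap) (simp add: mult.commute)
  also have "\<dots> = mat_trace (B * A)"
    using assms by (simp add: mat_trace_def scalar_prod_def)
  finally show ?thesis .
qed

lemma mat_trace_similar_mat_wit:
  fixes A B :: "'a::comm_ring_1 mat"
  assumes "similar_mat_wit A B P Q"
  shows "mat_trace A = mat_trace B"
proof -
  obtain n where A: "A \<in> carrier_mat n n"
    using assms unfolding similar_mat_wit_def Let_def by blast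
  note W = similar_mat_witD2[OF A assms]
  have "mat_trace A = mat_trace (P * (B * Q))" using W by (simp add: assoc_mult_mat)
  also have "\<dots> = mat_trace (B * Q * P)" using W by (simp add: mat_trace_mult_comm[of P n n])
  also have "B * Q * P = B" using W by (simp add: assoc_mult_mat)
  finally show ?thesis .
qed

lemma upper_triangular_mult_diag:
  fixes A B :: "'a::comm_semiring_1 mat"
  assumes "A \<in> carrier_mat n n" "B \<in> carrier_mat n n"
    and "upper_triangular A" "upper_triangular B" and "i < n"
  shows "(A * B) $$ (i, i) = A $$ (i, i) * B $$ (i, i)"
proof -
  have "(A * B) $$ (i, i) = (\<Sum>l\<in>{0..<n}. A $$ (i, l) * B $$ (l, i))"
    using assms by (simp add: scalar_prod_def)
  also have "\<dots> = (\<Sum>l\<in>{0..<n}. if l = i then A $$ (i, i) * B $$ (i, i) else 0)"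
  proof (intro sum.cong refl)
    fix l assume "l \<in> {0..<n}"
    then consider "l < i" | "l = i" | "i < l" "l < n" by force
    then show "A $$ (i, l) * B $$ (l, i) = (if l = i then A $$ (i, i) * B $$ (i, i) else 0)"
      by cases (use assms in \<open>auto dest: upper_triangularD\<close>)
  qed
  also have "\<dots> = A $$ (i, i) * B $$ (i, i)" using assms by simp
  finally show ?thesis .
qed

text \<open>In a Schur triangular form of \<open>Q\<close> every diagonal entry is \<open>0\<close> or \<open>s\<close>.\<close>

lemma mat_trace_scaled_idempotent:
  fixes Q :: "complex mat"
  assumes Q: "Q \<in> carrier_mat n n" and QQ: "Q * Q = s \<cdot>\<^sub>m Q"
  shows "\<exists>m::nat. mat_trace Q = of_nat m * s"
proof -
  obtain es where "char_poly Q = (\<Prod>a\<leftarrow>es. [:- a, 1:])"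
    using char_poly_factorized[OF Q] by blast
  then obtain B P P' where B: "B \<in> carrier_mat n n" "upper_triangular B"
    and wit: "similar_mat_wit Q B P P'"
    using schur_decomposition_exists[OF Q] unfolding similar_mat_def by blast
  note W = similar_mat_witD2[OF Q wit]
  have "B * B = P' * (Q * Q) * P"
    using similar_mat_wit_pow_id[OF similar_mat_wit_sym[OF wit], of 2] B Q
    by (simp add: numeral_2_eq_2)
  also have "\<dots> = s \<cdot>\<^sub>m (P' * Q * P)"
    unfolding QQ using Q W(6,7) by (metis mult_smult_distrib mult_smult_assoc_mat mult_carrier_mat)
  also have "P' * Q * P = B"
    using similar_mat_witD2(3)[OF B(1) similar_mat_wit_sym[OF wit]] by simp
  finally have BB: "B * B = s \<cdot>\<^sub>m B" .
  have diag: "B $$ (i, i) = 0 \<or> B $$ (i, i) = s" if "i < n" for i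
  proof -
    have "B $$ (i, i) * B $$ (i, i) = s * B $$ (i, i)"
      using upper_triangular_mult_diag[OF B(1) B(1) B(2) B(2) that] B(1) that
      by (metis BB index_smult_mat(1) carrier_matD)
    then show ?thesis by (metis mult_cancel_right)
  qed
  have "mat_trace Q = mat_trace B" by (rule mat_trace_similar_mat_wit[OF wit])
  also have "\<dots> = (\<Sum>i\<in>{0..<n}. if B $$ (i, i) = s then s else 0)"
    unfolding mat_trace_def using B(1) diag by (intro sum.cong) auto
  also have "\<dots> = of_nat (card {i\<in>{0..<n}. B $$ (i, i) = s}) * s"
    by (simp add: sum.If_cases Int_def conj_commute)
  finally show ?thesis by blast
qed

lemma mat_mult_row_sum:
  fixes A B :: "'a::comm_semiring_1 mat"
  assumes "A \<in> carrier_mat n n" "B \<in> carrier_mat n n"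
    and "\<And>l. l < n \<Longrightarrow> (\<Sum>j\<in>{0..<n}. B $$ (l, j)) = r" and "i < n"
  shows "(\<Sum>j\<in>{0..<n}. (A * B) $$ (i, j)) = (\<Sum>l\<in>{0..<n}. A $$ (i, l)) * r"
proof -
  have "(\<Sum>j\<in>{0..<n}. (A * B) $$ (i, j)) = (\<Sum>j\<in>{0..<n}. \<Sum>l\<in>{0..<n}. A $$ (i, l) * B $$ (l, j))"
    using assms by (simp add: scalar_prod_def)
  also have "\<dots> = (\<Sum>l\<in>{0..<n}. A $$ (i, l) * (\<Sum>j\<in>{0..<n}. B $$ (l, j)))"
    by (subst sum.swap) (simp add: sum_distrib_left)
  also have "\<dots> = (\<Sum>l\<in>{0..<n}. A $$ (i, l)) * r"
    using assms(3) by (simp add: sum_distrib_right)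
  finally show ?thesis .
qed

lemma sum_shifted_products:
  fixes x y u v :: "'i \<Rightarrow> 'a::comm_ring_1"
  shows "(\<Sum>l\<in>A. (x l - t * u l - b) * (y l - t * v l - b))
    = (\<Sum>l\<in>A. x l * y l) - t * (\<Sum>l\<in>A. x l * v l) - t * (\<Sum>l\<in>A. u l * y l)
      + t\<^sup>2 * (\<Sum>l\<in>A. u l * v l) - b * (\<Sum>l\<in>A. x l) - b * (\<Sum>l\<in>A. y l)
      + t * b * (\<Sum>l\<in>A. u l) + t * b * (\<Sum>l\<in>A. v l) + of_nat (card A) * b\<^sup>2"
proof -
  have "(\<Sum>l\<in>A. (x l - t * u l - b) * (y l - t * v l - b))
    = (\<Sum>l\<in>A. x l * y l - t * (x l * v l) - t * (u l * y l) + t\<^sup>2 * (u l * v l)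
         - b * x l - b * y l + t * b * u l + t * b * v l + b\<^sup>2)"
    by (intro sum.cong refl) (simp add: algebra_simps power2_eq_square)
  then show ?thesis
    by (simp add: sum.distrib sum_subtractf sum_distrib_left[symmetric] mult.assoc)
qed

lemma shifted_mat_square_entry:
  fixes M :: "'a::comm_ring_1 mat" and n :: nat
  defines "J \<equiv> mat n n (\<lambda>_. 1)"
  assumes M: "M \<in> carrier_mat n n"
    and rows: "\<And>i. i < n \<Longrightarrow> (\<Sum>l\<in>{0..<n}. M $$ (i, l)) = r"
    and cols: "\<And>j. j < n \<Longrightarrow> (\<Sum>l\<in>{0..<n}. M $$ (l, j)) = r"
    and ij: "i < n" "j < n"
  shows "((M - t \<cdot>\<^sub>m 1\<^sub>m n - b \<cdot>\<^sub>m J) * (M - t \<cdot>\<^sub>m 1\<^sub>m n - b \<cdot>\<^sub>m J)) $$ (i, j)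
    = (M * M) $$ (i, j) - 2 * t * M $$ (i, j) + t\<^sup>2 * of_bool (i = j)
      - 2 * b * r + 2 * t * b + of_nat n * b\<^sup>2"
proof -
  have "((M - t \<cdot>\<^sub>m 1\<^sub>m n - b \<cdot>\<^sub>m J) * (M - t \<cdot>\<^sub>m 1\<^sub>m n - b \<cdot>\<^sub>m J)) $$ (i, j)
      = (\<Sum>l\<in>{0..<n}. (M $$ (i, l) - t * of_bool (i = l) - b) * (M $$ (l, j) - t * of_bool (l = j) - b))"
    using M ij by (auto simp: J_def scalar_prod_def intro!: sum.cong)
  also have "\<dots> = (M * M) $$ (i, j) - 2 * t * M $$ (i, j) + t\<^sup>2 * of_bool (i = j)
      - 2 * b * r + 2 * t * b + of_nat n * b\<^sup>2"
    unfolding sum_shifted_products using M ij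
    by (simp add: rows cols scalar_prod_def Int_absorb1 Int_absorb2 algebra_simps)
  finally show ?thesis .
qed

definition adjacency_mat :: "nat \<Rightarrow> (nat \<Rightarrow> 'v) \<Rightarrow> ('v \<Rightarrow> 'v \<Rightarrow> bool) \<Rightarrow> 'a::semiring_1 mat" where
  "adjacency_mat n f E = mat n n (\<lambda>(i, j). of_bool (E (f i) (f j)))"

context
  fixes V :: "'v set" and E :: "'v \<Rightarrow> 'v \<Rightarrow> bool" and n :: nat and f :: "nat \<Rightarrow> 'v"
  assumes graph: "simple_graph V E" and enum: "bij_betw f {0..<n} V"
begin

lemma sum_of_bool_enum:
  "(\<Sum>l\<in>{0..<n}. of_bool (P (f l)) :: 'a::semiring_1) = of_nat (card {z\<in>V. P z})"
proof -
  have "(\<Sum>l\<in>{0..<n}. of_bool (P (f l)) :: 'a) = (\<Sum>z\<in>V. of_bool (P z))"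
    by (rule sum.reindex_bij_betw[OF enum])
  also have "\<dots> = of_nat (card {z\<in>V. P z})"
    using graph by (simp add: simple_graph_def Int_def conj_commute)
  finally show ?thesis .
qed

lemma adjacency_mat_diag: "i < n \<Longrightarrow> adjacency_mat n f E $$ (i, i) = 0"
  using graph by (simp add: adjacency_mat_def simple_graph_def)

lemma adjacency_mat_row_sum:
  "i < n \<Longrightarrow> (\<Sum>l\<in>{0..<n}. adjacency_mat n f E $$ (i, l)) = (of_nat (card {z\<in>V. E (f i) z}) :: 'a::semiring_1)"
  by (simp add: adjacency_mat_def sum_of_bool_enum)

lemma adjacency_mat_col_sum:
  assumes "i < n"
  shows "(\<Sum>l\<in>{0..<n}. adjacency_mat n f E $$ (l, i)) = (of_nat (card {z\<in>V. E (f i) z}) :: 'a::semiring_1)"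
proof -
  have "(\<Sum>l\<in>{0..<n}. adjacency_mat n f E $$ (l, i)) = (\<Sum>l\<in>{0..<n}. of_bool (E (f i) (f l)) :: 'a)"
    using graph assms unfolding simple_graph_def by (intro sum.cong refl) (auto simp: adjacency_mat_def)
  also have "\<dots> = of_nat (card {z\<in>V. E (f i) z})"
    by (rule sum_of_bool_enum)
  finally show ?thesis .
qed

lemma adjacency_mat_square:
  assumes "i < n" "j < n"
  shows "(adjacency_mat n f E * adjacency_mat n f E) $$ (i, j)
    = (of_nat (card {z\<in>V. E (f i) z \<and> E (f j) z}) :: 'a::semiring_1)"
proof -
  have "(adjacency_mat n f E * adjacency_mat n f E) $$ (i, j)
      = (\<Sum>l\<in>{0..<n}. of_bool (E (f i) (f l)) * of_bool (E (f l) (f j)) :: 'a)"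
    using assms by (simp add: adjacency_mat_def scalar_prod_def)
  also have "\<dots> = (\<Sum>l\<in>{0..<n}. of_bool (E (f i) (f l) \<and> E (f j) (f l)))"
    using graph unfolding simple_graph_def by (intro sum.cong refl) auto
  also have "\<dots> = of_nat (card {z\<in>V. E (f i) z \<and> E (f j) z})"
    by (rule sum_of_bool_enum)
  finally show ?thesis .
qed

end

lemma srg_adjacency_mat_row_sum:
  assumes srg: "strongly_regular V E n k a c" and enum: "bij_betw f {0..<n} V" and i: "i < n"
  shows "(\<Sum>l\<in>{0..<n}. adjacency_mat n f E $$ (i, l)) = (of_nat k :: 'a::semiring_1)"
    and "(\<Sum>l\<in>{0..<n}. adjacency_mat n f E $$ (l, i)) = (of_nat k :: 'a::semiring_1)"
proof -
  have graph: "simple_graph V E" and "card {z\<in>V. E (f i) z} = k"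
    using srg bij_betwE[OF enum] i unfolding strongly_regular_def by auto
  then show "(\<Sum>l\<in>{0..<n}. adjacency_mat n f E $$ (i, l)) = (of_nat k :: 'a)"
    and "(\<Sum>l\<in>{0..<n}. adjacency_mat n f E $$ (l, i)) = (of_nat k :: 'a)"
    using adjacency_mat_row_sum[OF graph enum i] adjacency_mat_col_sum[OF graph enum i] by simp_all
qed

lemma srg_adjacency_mat_square:
  fixes E :: "'v \<Rightarrow> 'v \<Rightarrow> bool" and n :: nat and f :: "nat \<Rightarrow> 'v"
  defines "A \<equiv> adjacency_mat n f E :: 'a::comm_ring_1 mat"
  assumes srg: "strongly_regular V E n k a c" and enum: "bij_betw f {0..<n} V"
    and ij: "i < n" "j < n"
  shows "(A * A) $$ (i, j) = of_nat k * of_bool (i = j) + of_nat a * A $$ (i, j)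
    + of_nat c * (1 - of_bool (i = j) - A $$ (i, j))"
proof -
  have graph: "simple_graph V E" using srg by (simp add: strongly_regular_def)
  have fij: "f i \<in> V" "f j \<in> V" and inj: "f i = f j \<longleftrightarrow> i = j"
    using enum ij by (auto simp: bij_betw_def inj_on_def)
  have Aij: "A $$ (i, j) = of_bool (E (f i) (f j))"
    using ij by (simp add: A_def adjacency_mat_def)
  have "(A * A) $$ (i, j) = of_nat (card {z\<in>V. E (f i) z \<and> E (f j) z})"
    unfolding A_def by (rule adjacency_mat_square[OF graph enum ij])
  also have "\<dots> = of_nat k * of_bool (i = j) + of_nat a * A $$ (i, j)
    + of_nat c * (1 - of_bool (i = j) - A $$ (i, j))"
  proof (cases "i = j")
    case True
    then have "\<not> E (f i) (f j)" using graph by (simp add: simple_graph_def)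
    then show ?thesis using srg fij True Aij by (simp add: strongly_regular_def)
  next
    case False
    then show ?thesis using srg fij inj Aij by (cases "E (f i) (f j)") (simp_all add: strongly_regular_def)
  qed
  finally show ?thesis .
qed

lemma srg_counting_identity:
  assumes srg: "strongly_regular V E n k a c" and "V \<noteq> {}"
  shows "int k * (int k - int a - 1) = int c * (int n - 1 - int k)"
proof -
  have "finite V" "card V = n"
    using srg unfolding strongly_regular_def simple_graph_def by auto
  then obtain f where enum: "bij_betw f {0..<n} V"
    using ex_bij_betw_nat_finite[of V] by metis
  have "0 < n" using \<open>finite V\<close> \<open>card V = n\<close> \<open>V \<noteq> {}\<close> by auto
  define A :: "int mat" where "A = adjacency_mat n f E"
  have A: "A \<in> carrier_mat n n" by (simp add: A_def adjacency_mat_def)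
  note rows = srg_adjacency_mat_row_sum[OF srg enum, where 'a = int, folded A_def]
  have "int k * int k = (\<Sum>j\<in>{0..<n}. (A * A) $$ (0, j))"
    using mat_mult_row_sum[OF A A rows(1) \<open>0 < n\<close>] rows(1)[OF \<open>0 < n\<close>] by simp
  also have "\<dots> = (\<Sum>j\<in>{0..<n}. int k * of_bool (0 = j) + int a * A $$ (0, j)
      + int c * (1 - of_bool (0 = j) - A $$ (0, j)))"
    using srg_adjacency_mat_square[OF srg enum \<open>0 < n\<close>, where 'a = int, folded A_def]
    by (intro sum.cong) auto
  also have "\<dots> = int k + int a * int k + int c * (int n - 1 - int k)"
    using \<open>0 < n\<close> rows(1)[OF \<open>0 < n\<close>]
    by (simp add: sum.distrib sum_subtractf sum_distrib_left[symmetric])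
  finally show ?thesis by (simp add: algebra_simps)
qed

lemma srg_eigenvalue_relations:
  fixes a c k s e :: int
  assumes "s\<^sup>2 = (a - c)\<^sup>2 + 4 * (k - c)" and "2 * e = a - c + s"
  shows "a = c + 2 * e - s" and "k = s * e - e\<^sup>2 + c"
proof -
  show a: "a = c + 2 * e - s" using assms(2) by simp
  have "4 * k = 4 * (s * e - e\<^sup>2 + c)"
    using assms(1) unfolding a by (simp add: algebra_simps power2_eq_square)
  then show "k = s * e - e\<^sup>2 + c" by simp
qed

lemma srg_order_eigenvalue_identity:
  fixes a c k n s e :: int
  assumes a: "a = c + 2 * e - s" and k: "k = s * e - e\<^sup>2 + c"
    and count: "k * (k - a - 1) = c * (n - 1 - k)"
  shows "n * c = (k - (e - s)) * (k - e)"
proof -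
  have "n * c = c * (n - 1 - k) + c * (k + 1)" by (simp add: algebra_simps)
  also have "\<dots> = k * (k - a - 1) + c * (k + 1)" unfolding count ..
  also have "\<dots> = (k - (e - s)) * (k - e)"
    unfolding a k by (simp add: algebra_simps power2_eq_square)
  finally show ?thesis .
qed

lemma srg_eigenvalue_multiplicity_dvd:
  fixes s e :: int
  assumes srg: "strongly_regular V E n k a c" and "V \<noteq> {}"
    and a: "int a = int c + 2 * e - s" and k: "int k = s * e - e\<^sup>2 + int c"
  shows "s dvd int k + e * (int n - 1)"
proof -
  have graph: "simple_graph V E" and "finite V" "card V = n"
    using srg unfolding strongly_regular_def simple_graph_def by auto
  then obtain f where enum: "bij_betw f {0..<n} V"
    using ex_bij_betw_nat_finite[of V] by metis
  have "0 < n" using \<open>finite V\<close> \<open>card V = n\<close> \<open>V \<noteq> {}\<close> by auto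
  define M :: "complex mat" where "M = adjacency_mat n f E"
  define t :: complex where "t = of_int (e - s)"
  define b :: complex where "b = (of_nat k - t) / of_nat n"
  define Q where "Q = M - t \<cdot>\<^sub>m 1\<^sub>m n - b \<cdot>\<^sub>m mat n n (\<lambda>_. 1)"
  have M: "M \<in> carrier_mat n n" by (simp add: M_def adjacency_mat_def)
  note rows = srg_adjacency_mat_row_sum[OF srg enum, where 'a = complex, folded M_def]
  have nb: "of_nat n * b = of_nat k - t" using \<open>0 < n\<close> by (simp add: b_def)
  have a': "of_nat a = of_nat c + 2 * of_int e - (of_int s :: complex)"
    using arg_cong[OF a, of complex_of_int] by simp
  have k': "of_nat k = of_int s * of_int e - (of_int e)\<^sup>2 + (of_nat c :: complex)"
    using arg_cong[OF k, of complex_of_int] by simp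
  have "of_nat n * of_nat c = (of_nat k - t) * (of_nat k - t - (of_int s :: complex))"
    using arg_cong[OF srg_order_eigenvalue_identity[OF a k srg_counting_identity[OF srg \<open>V \<noteq> {}\<close>]],
        of complex_of_int]
    unfolding t_def by simp
  then have cb: "of_nat c = b * (of_nat k - t - of_int s)"
    using \<open>0 < n\<close> by (simp add: b_def field_simps)
  have coeff_x: "of_nat a - of_nat c - 2 * t = of_int s"
    unfolding a' t_def by simp
  have coeff_d: "of_nat k - of_nat c + t\<^sup>2 = - of_int s * t"
    unfolding k' t_def by (simp add: algebra_simps power2_eq_square)
  have coeff_1: "of_nat c - 2 * b * of_nat k + 2 * t * b + (of_nat n * b) * b = - of_int s * b"
    unfolding nb by (subst cb) (simp add: algebra_simps)
  have QQ: "Q * Q = of_int s \<cdot>\<^sub>m Q"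
  proof (rule eq_matI)
    fix i j assume "i < dim_row (of_int s \<cdot>\<^sub>m Q)" "j < dim_col (of_int s \<cdot>\<^sub>m Q)"
    then have ij: "i < n" "j < n" by (auto simp: Q_def)
    let ?x = "M $$ (i, j)" and ?d = "of_bool (i = j) :: complex"
    have "(Q * Q) $$ (i, j) = (M * M) $$ (i, j) - 2 * t * ?x + t\<^sup>2 * ?d
        - 2 * b * of_nat k + 2 * t * b + of_nat n * b\<^sup>2"
      unfolding Q_def by (rule shifted_mat_square_entry[OF M rows ij])
    also have "\<dots> = of_nat k * ?d + of_nat a * ?x + of_nat c * (1 - ?d - ?x) - 2 * t * ?x + t\<^sup>2 * ?d
        - 2 * b * of_nat k + 2 * t * b + of_nat n * b\<^sup>2"
      using srg_adjacency_mat_square[OF srg enum ij, where 'a = complex, folded M_def] by simp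
    also have "\<dots> = ?x * (of_nat a - of_nat c - 2 * t) + ?d * (of_nat k - of_nat c + t\<^sup>2)
        + (of_nat c - 2 * b * of_nat k + 2 * t * b + (of_nat n * b) * b)"
      by (simp add: algebra_simps power2_eq_square)
    also have "\<dots> = ?x * of_int s + ?d * (- of_int s * t) + (- of_int s * b)"
      using coeff_x coeff_d coeff_1 by simp
    also have "\<dots> = of_int s * (?x - t * ?d - b)"
      by (simp add: algebra_simps)
    also have "\<dots> = (of_int s \<cdot>\<^sub>m Q) $$ (i, j)" using ij by (simp add: Q_def)
    finally show "(Q * Q) $$ (i, j) = (of_int s \<cdot>\<^sub>m Q) $$ (i, j)" .
  qed (simp_all add: Q_def)
  have "Q \<in> carrier_mat n n" unfolding Q_def by (intro minus_carrier_mat) simp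
  then obtain m where "mat_trace Q = of_nat m * of_int s"
    using mat_trace_scaled_idempotent[OF _ QQ] by blast
  moreover have "mat_trace Q = - (of_nat k + t * (of_nat n - 1))"
  proof -
    have "mat_trace Q = (\<Sum>i\<in>{0..<n}. - t - b)"
      unfolding mat_trace_def Q_def
      using adjacency_mat_diag[OF graph enum, where 'a = complex, folded M_def]
      by (intro sum.cong) auto
    also have "\<dots> = - (of_nat n * t) - of_nat n * b" by (simp add: algebra_simps)
    also have "\<dots> = - (of_nat k + t * (of_nat n - 1))" unfolding nb by (simp add: algebra_simps)
    finally show ?thesis .
  qed
  ultimately have "complex_of_int (int k + e * (int n - 1)) = complex_of_int (s * (int n - 1 - int m))"
    unfolding t_def by (simp add: algebra_simps)
  then have "int k + e * (int n - 1) = s * (int n - 1 - int m)"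
    using of_int_eq_iff by blast
  then show ?thesis by simp
qed

lemma srg_divisor_c:
  fixes a c k n s e :: int
  assumes a: "a = c + 2 * e - s" and k: "k = s * e - e\<^sup>2 + c"
    and count: "k * (k - a - 1) = c * (n - 1 - k)"
  shows "c dvd e * (e + 1) * (e - a) * (e - a - 1)"
proof -
  have "e * (e + 1) * (e - a) * (e - a - 1) = (k - c * (e + 1)) * (k - a - 1 - c * (e + 1))"
    unfolding a k by (simp add: algebra_simps power2_eq_square)
  also have "\<dots> = k * (k - a - 1) - c * (e + 1) * (2 * k - a - 1 - c * (e + 1))"
    by (simp add: algebra_simps)
  also have "\<dots> = c * ((n - 1 - k) - (e + 1) * (2 * k - a - 1 - c * (e + 1)))"
    unfolding count by (simp add: algebra_simps)
  finally show ?thesis by simp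
qed

lemma srg_divisor_s:
  fixes a c k n s e :: int
  assumes a: "a = c + 2 * e - s" and k: "k = s * e - e\<^sup>2 + c"
    and count: "k * (k - a - 1) = c * (n - 1 - k)" and mult: "s dvd k + e * (n - 1)"
  shows "s dvd (e + 1) * (e\<^sup>2 + 2 * e - a) * (e\<^sup>2 + 3 * e - a)"
proof -
  have "(e + 1) * (e\<^sup>2 + 2 * e - a) * (e\<^sup>2 + 3 * e - a)
      = s * ((e + 1)\<^sup>2 * (s * (e + 1) - 2 * k + e)) + (e + 1) * k * (k - e)"
    unfolding a k by (simp add: algebra_simps power2_eq_square)
  moreover have "(e + 1) * k * (k - e) = c * (k + e * (n - 1))"
  proof -
    have "c * (k + e * (n - 1)) = c * k + e * (c * (n - 1 - k) + c * k)"
      by (simp add: algebra_simps)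
    also have "\<dots> = c * k + e * (k * (k - a - 1) + c * k)"
      unfolding count ..
    also have "\<dots> = (e + 1) * k * (k - e)"
      unfolding a k by (simp add: algebra_simps power2_eq_square)
    finally show ?thesis by simp
  qed
  ultimately show ?thesis using mult by (metis dvd_add dvd_mult dvd_triv_left)
qed

theorem theorem3p1:
  fixes V :: "'v set" and E :: "'v \<Rightarrow> 'v \<Rightarrow> bool"
    and n k a c :: nat and s e :: int
  assumes "strongly_regular V E n k a c"
    and "graph_connected V E"
    and "\<not> bipartite V E"
    and "k \<ge> 3" and "k > c" and "c \<ge> 1"
    and "s > 0"
    and "s ^ 2 = (int a - int c) ^ 2 + 4 * (int k - int c)"
    and "2 * e = int a - int c + s"
  shows "int c dvd e * (e + 1) * (e - int a) * (e - int a - 1)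
    \<and> (int c + 2 * e - int a) dvd (e + 1) * (e ^ 2 + 2 * e - int a) * (e ^ 2 + 3 * e - int a)"
proof -
  \<comment> \<open>Non-bipartiteness only serves to exclude the empty graph, for which \<open>k, a, c\<close> are
    unconstrained.\<close>
  have "V \<noteq> {}"
    using assms(1,3) unfolding strongly_regular_def simple_graph_def bipartite_def by auto
  note rel = srg_eigenvalue_relations[OF assms(8,9)]
  note count = srg_counting_identity[OF assms(1) \<open>V \<noteq> {}\<close>]
  have "s dvd int k + e * (int n - 1)"
    by (rule srg_eigenvalue_multiplicity_dvd[OF assms(1) \<open>V \<noteq> {}\<close> rel])
  moreover have "int c + 2 * e - int a = s" using rel(1) by simp
  ultimately show ?thesis
    using srg_divisor_c[OF rel count] srg_divisor_s[OF rel count] by simp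
qed

end
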